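(* Let $(M,\mathbf g)$ be a $(d+1)$-dimensional spacetime with metric $$\mathbf g=g_{tt}(r)\,\mathbf dt^2+g_{rr}(r)\,\mathbf dr^2+r^2\{\mathbf d\theta^2+s(\theta)^2\mathbf d\Omega_{(d-2)}^2\},$$ where $g_{tt}<0$ and $g_{rr}>0$ are smooth, $\mathbf d\Omega_{(d-2)}^2$ is the metric of the unit $(d-2)$-sphere, and $s(\theta)=\sin\theta$, $\theta$, or $\sinh\theta$. Let $S=\{r=r_p\}$, a timelike hypersurface, let $p\in S$, and let $\boldsymbol\sigma_{\boldsymbol\chi}$ be the trace-free part of the second fundamental form of $S$. Then for any nonzero vectors $\mathbf X,\mathbf Y\in T_pS$: $\boldsymbol\sigma_{\boldsymbol\chi}(\mathbf X,\mathbf X)=0$ iff $\boldsymbol\sigma_{\boldsymbol\chi}(\mathbf Y,\mathbf Y)=0$; $\boldsymbol\sigma_{\boldsymbol\chi}(\mathbf X,\mathbf X)>0$ iff $\boldsymbol\sigma_{\boldsymbol\chi}(\mathbf Y,\mathbf Y)>0$; and $\boldsymbol\sigma_{\boldsymbol\chi}(\mathbf X,\mathbf X)<0$ iff $\boldsymbol\sigma_{\boldsymbol\chi}(\mathbf Y,\mathbf Y)<0$.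
   Context: For a hypersurface $S$ with unit normal $\bar{\mathbf m}$ and induced metric $\mathbf h$, the second fundamental form is $\boldsymbol\chi(X,Y)=\mathbf g(\nabla_X\bar{\mathbf m},Y)$ for $X,Y$ tangent to $S$; the mean curvature is $H=\frac1d\mathrm{tr}_{\mathbf h}\boldsymbol\chi$ and the trace-free part is $\boldsymbol\sigma_{\boldsymbol\chi}=\boldsymbol\chi-H\mathbf h$. *)

theory Defs
  imports "HOL-Analysis.Analysis"
begin

text \<open>Points and vectors are
  functions nat \<Rightarrow> real; only the components with index < n are meaningful.\<close>

definition pd :: "nat \<Rightarrow> ((nat \<Rightarrow> real) \<Rightarrow> real) \<Rightarrow> (nat \<Rightarrow> real) \<Rightarrow> real" where
  "pd i f x = deriv (\<lambda>h. f (x(i := x i + h))) 0"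

definition coord_vec :: "nat \<Rightarrow> nat \<Rightarrow> real" where
  "coord_vec a = (\<lambda>k. if k = a then 1 else 0)"

definition gform :: "nat \<Rightarrow> (nat \<Rightarrow> nat \<Rightarrow> real) \<Rightarrow> (nat \<Rightarrow> real) \<Rightarrow> (nat \<Rightarrow> real) \<Rightarrow> real" where
  "gform n G X Y = (\<Sum>i<n. \<Sum>j<n. G i j * X i * Y j)"

text \<open>Christoffel symbols of the first kind of the Levi-Civita connection:
  christoffel1 g x l i j = g(nabla_{d_i} d_j, d_l).\<close>
definition christoffel1 ::
  "((nat \<Rightarrow> real) \<Rightarrow> nat \<Rightarrow> nat \<Rightarrow> real) \<Rightarrow> (nat \<Rightarrow> real) \<Rightarrow> nat \<Rightarrow> nat \<Rightarrow> nat \<Rightarrow> real" where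
  "christoffel1 g x l i j =
     (pd i (\<lambda>y. g y j l) x + pd j (\<lambda>y. g y i l) x - pd l (\<lambda>y. g y i j) x) / 2"

text \<open>cov_form n g V x X Y = g(nabla_X V, Y) at the point x, for a vector field V.\<close>
definition cov_form ::
  "nat \<Rightarrow> ((nat \<Rightarrow> real) \<Rightarrow> nat \<Rightarrow> nat \<Rightarrow> real) \<Rightarrow> ((nat \<Rightarrow> real) \<Rightarrow> nat \<Rightarrow> real)
     \<Rightarrow> (nat \<Rightarrow> real) \<Rightarrow> (nat \<Rightarrow> real) \<Rightarrow> (nat \<Rightarrow> real) \<Rightarrow> real" where
  "cov_form n g V x X Y =
     (\<Sum>i<n. \<Sum>l<n. X i * Y l *
        ((\<Sum>k<n. g x k l * pd i (\<lambda>y. V y k) x) + (\<Sum>j<n. christoffel1 g x l i j * V x j)))"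

definition trace_wrt :: "nat set \<Rightarrow> (nat \<Rightarrow> nat \<Rightarrow> real) \<Rightarrow> (nat \<Rightarrow> nat \<Rightarrow> real) \<Rightarrow> real" where
  "trace_wrt I h c =
     (let hinv = (SOME q. \<forall>a\<in>I. \<forall>b\<in>I. (\<Sum>e\<in>I. q a e * h e b) = (if a = b then 1 else 0))
      in \<Sum>a\<in>I. \<Sum>b\<in>I. hinv a b * c a b)"

text \<open>Hypersurfaces S = {x. x 1 = const} (level sets of coordinate 1), with unit normal
  field m. Tangent space of S is spanned by the coordinate vectors d_a, a < n, a \<noteq> 1;
  S has dimension n - 1.\<close>
definition tangent_idx :: "nat \<Rightarrow> nat set" where
  "tangent_idx n = {a. a < n \<and> a \<noteq> 1}"

definition sff ::
  "nat \<Rightarrow> ((nat \<Rightarrow> real) \<Rightarrow> nat \<Rightarrow> nat \<Rightarrow> real) \<Rightarrow> ((nat \<Rightarrow> real) \<Rightarrow> nat \<Rightarrow> real)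
     \<Rightarrow> (nat \<Rightarrow> real) \<Rightarrow> (nat \<Rightarrow> real) \<Rightarrow> (nat \<Rightarrow> real) \<Rightarrow> real" where
  "sff n g m x X Y = cov_form n g m x X Y"

definition mean_curv ::
  "nat \<Rightarrow> ((nat \<Rightarrow> real) \<Rightarrow> nat \<Rightarrow> nat \<Rightarrow> real) \<Rightarrow> ((nat \<Rightarrow> real) \<Rightarrow> nat \<Rightarrow> real)
     \<Rightarrow> (nat \<Rightarrow> real) \<Rightarrow> real" where
  "mean_curv n g m x =
     trace_wrt (tangent_idx n) (\<lambda>a b. g x a b)
       (\<lambda>a b. sff n g m x (coord_vec a) (coord_vec b)) / real (n - 1)"

definition tf_sff ::
  "nat \<Rightarrow> ((nat \<Rightarrow> real) \<Rightarrow> nat \<Rightarrow> nat \<Rightarrow> real) \<Rightarrow> ((nat \<Rightarrow> real) \<Rightarrow> nat \<Rightarrow> real)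
     \<Rightarrow> (nat \<Rightarrow> real) \<Rightarrow> (nat \<Rightarrow> real) \<Rightarrow> (nat \<Rightarrow> real) \<Rightarrow> real" where
  "tf_sff n g m x X Y = sff n g m x X Y - mean_curv n g m x * gform n (g x) X Y"

text \<open>The metric g_tt(r) dt^2 + g_rr(r) dr^2 + r^2 (dtheta^2 + s(theta)^2 dOmega_(d-2)^2)
  on an (d+1)-dimensional patch, coordinates x0 = t, x1 = r, x2 = theta, and
  x3, ..., xd standard hyperspherical coordinates on the unit (d-2)-sphere, whose metric is
  dphi_1^2 + sin^2 phi_1 dphi_2^2 + ... + (prod_{j<d-2} sin^2 phi_j) dphi_(d-2)^2.\<close>
definition ss_metric ::
  "nat \<Rightarrow> (real \<Rightarrow> real) \<Rightarrow> (real \<Rightarrow> real) \<Rightarrow> (real \<Rightarrow> real) \<Rightarrow> (nat \<Rightarrow> real) \<Rightarrow> nat \<Rightarrow> nat \<Rightarrow> real" where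
  "ss_metric d gtt grr s x i j =
     (if i \<noteq> j \<or> i > d then 0
      else if i = 0 then gtt (x 1)
      else if i = 1 then grr (x 1)
      else if i = 2 then (x 1)\<^sup>2
      else (x 1)\<^sup>2 * (s (x 2))\<^sup>2 * (\<Prod>k\<in>{3..<i}. (sin (x k))\<^sup>2))"

end

theory Submission
  imports Defs
begin

(* The metric is diagonal and the unit normal m of S = {r = r_p} is orthogonal to the coordinate
   vectors tangent to S, so its tangential components vanish on S, together with their tangential
   derivatives.  Hence the second fundamental form is diagonal in the coordinate frame,
   chi_ii = m^r (d_r g_ii) / 2: every angular direction has principal curvature m^r / r and the
   time direction has m^r g_tt' / (2 g_tt).  Subtracting the mean curvature leaves
     sigma_chi(X, X) = C * (-(d - 1) g_tt X_t^2 + sum_{i >= 2} g_ii X_i^2)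
   with C independent of X.  As g_tt < 0 and d >= 2, the quadratic form is positive definite on
   T_p S, so sigma_chi(X, X) has the sign of C for every nonzero tangent vector X. *)

lemma sum_eq_single:
  assumes "finite A" "a \<in> A" "\<And>b. b \<in> A \<Longrightarrow> b \<noteq> a \<Longrightarrow> f b = 0"
  shows "sum f A = f a"
  using sum.mono_neutral_right[of A "{a}" f] assms by auto

lemma sum_coord_vec_mult:
  "a < n \<Longrightarrow> (\<Sum>i<n. coord_vec a i * coord_vec b i * f i) = (if a = b then f a else 0)"
  by (simp add: coord_vec_def if_distrib[of "\<lambda>x. x * _"] cong: if_cong)

lemma pd_eq_0_if_eventually_0:
  assumes "\<forall>\<^sub>F h in nhds 0. f (x(i := x i + h)) = 0"
  shows "pd i f x = 0"
proof -
  have "DERIV (\<lambda>h. f (x(i := x i + h))) 0 :> 0"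
    using DERIV_cong_ev[of 0 0 "\<lambda>h. f (x(i := x i + h))" "\<lambda>_. 0" 0 0] assms by simp
  then show ?thesis unfolding pd_def by (rule DERIV_imp_deriv)
qed

lemma pd_eq_0_if_0: "(\<And>y. f y = 0) \<Longrightarrow> pd i f x = 0"
  unfolding pd_def by simp

lemma gform_diag:
  assumes "\<And>i j. i \<noteq> j \<Longrightarrow> G i j = 0"
  shows "gform n G X Y = (\<Sum>i<n. G i i * X i * Y i)"
  unfolding gform_def by (intro sum.cong refl sum_eq_single) (auto simp: assms)

lemma gform_coord_vec:
  assumes "\<And>i j. i \<noteq> j \<Longrightarrow> G i j = 0" "a < n"
  shows "gform n G V (coord_vec a) = G a a * V a"
  using assms by (simp add: gform_diag coord_vec_def if_distrib[of "\<lambda>x. _ * x"] cong: if_cong)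

lemma orthogonal_coord_vec_imp_component_eq_0:
  assumes "\<And>i j. i \<noteq> j \<Longrightarrow> G i j = 0" "a < n" "G a a \<noteq> 0"
    and "gform n G V (coord_vec a) = 0"
  shows "V a = 0"
  using assms by (simp add: gform_coord_vec)

lemma trace_wrt_diag:
  assumes "finite I"
    and h_diag: "\<And>a b. a \<in> I \<Longrightarrow> b \<in> I \<Longrightarrow> a \<noteq> b \<Longrightarrow> h a b = 0"
    and h_nonzero: "\<And>a. a \<in> I \<Longrightarrow> h a a \<noteq> 0"
    and c_diag: "\<And>a b. a \<in> I \<Longrightarrow> b \<in> I \<Longrightarrow> a \<noteq> b \<Longrightarrow> c a b = 0"
  shows "trace_wrt I h c = (\<Sum>a\<in>I. c a a / h a a)"
proof -
  define is_inv where
    "is_inv q \<longleftrightarrow>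
      (\<forall>a\<in>I. \<forall>b\<in>I. (\<Sum>e\<in>I. q a e * h e b) = (if a = b then 1 else (0::real)))" for q
  have diag_sum: "(\<Sum>e\<in>I. q a e * h e b) = q a b * h b b" if "b \<in> I" for q a b
    using \<open>finite I\<close> that by (intro sum_eq_single) (auto simp: h_diag)
  define q0 where "q0 a b = (if a = b then 1 / h a a else 0)" for a b
  have "is_inv q0"
    unfolding is_inv_def by (intro ballI, subst diag_sum) (auto simp: q0_def h_nonzero)
  define hinv where "hinv = (SOME q. is_inv q)"
  from \<open>is_inv q0\<close> have "is_inv hinv"
    unfolding hinv_def by (rule someI[where P = is_inv])
  have hinv_diag: "hinv a a = 1 / h a a" if "a \<in> I" for a
  proof -
    have "hinv a a * h a a = 1"
      using \<open>is_inv hinv\<close> that diag_sum[of a hinv a] unfolding is_inv_def by auto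
    then show ?thesis using h_nonzero[OF that] by (simp add: field_simps)
  qed
  have "trace_wrt I h c = (\<Sum>a\<in>I. \<Sum>b\<in>I. hinv a b * c a b)"
    by (simp add: trace_wrt_def hinv_def is_inv_def)
  also have "\<dots> = (\<Sum>a\<in>I. c a a / h a a)"
    using \<open>finite I\<close>
    by (intro sum.cong refl trans[OF sum_eq_single]) (auto simp: c_diag hinv_diag)
  finally show ?thesis .
qed

lemma pd_normal_component_eq_0:
  assumes diag: "\<And>y i j. i \<noteq> j \<Longrightarrow> g y i j = 0"
    and normal: "\<And>y. y 1 = p 1 \<Longrightarrow> gform n (g y) (m y) (coord_vec l) = 0"
    and "l < n" "i \<noteq> 1"
    and cont: "continuous (at 0) (\<lambda>h. g (p(i := p i + h)) l l)" and "g p l l \<noteq> 0"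
  shows "pd i (\<lambda>y. m y l) p = 0"
proof (rule pd_eq_0_if_eventually_0)
  have "((\<lambda>h. g (p(i := p i + h)) l l) \<longlongrightarrow> g p l l) (nhds 0)"
    using cont tendsto_at_iff_tendsto_nhds[of "\<lambda>h. g (p(i := p i + h)) l l" 0]
    by (simp add: continuous_at)
  then have "\<forall>\<^sub>F h in nhds 0. g (p(i := p i + h)) l l \<noteq> 0"
    using \<open>g p l l \<noteq> 0\<close> by (rule tendsto_imp_eventually_ne)
  then show "\<forall>\<^sub>F h in nhds 0. m (p(i := p i + h)) l = 0"
  proof (rule eventually_mono)
    fix h
    have "gform n (g (p(i := p i + h))) (m (p(i := p i + h))) (coord_vec l) = 0"
      using normal \<open>i \<noteq> 1\<close> by simp
    then show "g (p(i := p i + h)) l l \<noteq> 0 \<Longrightarrow> m (p(i := p i + h)) l = 0"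
      using orthogonal_coord_vec_imp_component_eq_0[of "g (p(i := p i + h))" l n] diag \<open>l < n\<close>
      by blast
  qed
qed

lemma christoffel1_normal_diag:
  assumes diag: "\<And>y i j. i \<noteq> j \<Longrightarrow> g y i j = 0" and "i \<noteq> 1" "l \<noteq> 1"
  shows "christoffel1 g x l i 1 = (if i = l then pd 1 (\<lambda>y. g y i i) x / 2 else 0)"
  using assms by (simp add: christoffel1_def pd_eq_0_if_0)

locale diagonal_level_set =
  fixes n :: nat and g :: "(nat \<Rightarrow> real) \<Rightarrow> nat \<Rightarrow> nat \<Rightarrow> real"
    and m :: "(nat \<Rightarrow> real) \<Rightarrow> nat \<Rightarrow> real" and p :: "nat \<Rightarrow> real"
  assumes one_less_dim: "1 < n"
    and diag: "\<And>y i j. i \<noteq> j \<Longrightarrow> g y i j = 0"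
    and normal_tangential_eq_0: "\<And>j. j \<in> tangent_idx n \<Longrightarrow> m p j = 0"
    and pd_normal_tangential_eq_0:
      "\<And>i l. i \<in> tangent_idx n \<Longrightarrow> l \<in> tangent_idx n \<Longrightarrow> pd i (\<lambda>y. m y l) p = 0"
begin

lemma sff_eq:
  assumes "X 1 = 0" "Y 1 = 0"
  shows "sff n g m p X Y = (\<Sum>i<n. X i * Y i * (m p 1 * pd 1 (\<lambda>y. g y i i) p / 2))"
proof -
  define \<kappa> where "\<kappa> i = m p 1 * pd 1 (\<lambda>y. g y i i) p / 2" for i
  have tangential_term:
    "(\<Sum>k<n. g p k l * pd i (\<lambda>y. m y k) p) + (\<Sum>j<n. christoffel1 g p l i j * m p j)
      = (if i = l then \<kappa> i else 0)" if "i \<in> tangent_idx n" "l \<in> tangent_idx n" for i l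
  proof -
    have "(\<Sum>k<n. g p k l * pd i (\<lambda>y. m y k) p) = g p l l * pd i (\<lambda>y. m y l) p"
      using that by (intro sum_eq_single) (auto simp: diag tangent_idx_def)
    moreover have "(\<Sum>j<n. christoffel1 g p l i j * m p j) = christoffel1 g p l i 1 * m p 1"
      using that one_less_dim
      by (intro sum_eq_single) (auto simp: normal_tangential_eq_0 tangent_idx_def)
    moreover have "christoffel1 g p l i 1 = (if i = l then pd 1 (\<lambda>y. g y i i) p / 2 else 0)"
      using that by (intro christoffel1_normal_diag[OF diag]) (auto simp: tangent_idx_def)
    ultimately show ?thesis
      using that by (simp add: pd_normal_tangential_eq_0 \<kappa>_def)
  qed
  have "X i * Y l * ((\<Sum>k<n. g p k l * pd i (\<lambda>y. m y k) p)
        + (\<Sum>j<n. christoffel1 g p l i j * m p j))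
      = (if l = i then X i * Y i * \<kappa> i else 0)" if "i < n" "l < n" for i l
    using that assms tangential_term[of i l]
    by (cases "i = 1 \<or> l = 1") (auto simp: tangent_idx_def)
  then have "sff n g m p X Y = (\<Sum>i<n. \<Sum>l<n. if l = i then X i * Y i * \<kappa> i else 0)"
    unfolding sff_def cov_form_def by (intro sum.cong refl) auto
  then show ?thesis by (simp add: \<kappa>_def)
qed

lemma mean_curv_eq:
  assumes nondeg: "\<And>a. a \<in> tangent_idx n \<Longrightarrow> g p a a \<noteq> 0"
  shows "mean_curv n g m p
    = (\<Sum>a\<in>tangent_idx n. m p 1 * pd 1 (\<lambda>y. g y a a) p / (2 * g p a a)) / real (n - 1)"
proof -
  have sff_coord: "sff n g m p (coord_vec a) (coord_vec b)
      = (if a = b then m p 1 * pd 1 (\<lambda>y. g y a a) p / 2 else 0)"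
    if "a \<in> tangent_idx n" "b \<in> tangent_idx n" for a b
  proof -
    have "sff n g m p (coord_vec a) (coord_vec b)
        = (\<Sum>i<n. coord_vec a i * coord_vec b i * (m p 1 * pd 1 (\<lambda>y. g y i i) p / 2))"
      using that by (intro sff_eq) (auto simp: coord_vec_def tangent_idx_def)
    also have "\<dots> = (if a = b then m p 1 * pd 1 (\<lambda>y. g y a a) p / 2 else 0)"
      using that by (intro sum_coord_vec_mult) (simp add: tangent_idx_def)
    finally show ?thesis .
  qed
  have "trace_wrt (tangent_idx n) (\<lambda>a b. g p a b)
        (\<lambda>a b. sff n g m p (coord_vec a) (coord_vec b))
      = (\<Sum>a\<in>tangent_idx n. m p 1 * pd 1 (\<lambda>y. g y a a) p / (2 * g p a a))"
    by (subst trace_wrt_diag) (auto simp: diag nondeg sff_coord tangent_idx_def)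
  then show ?thesis by (simp add: mean_curv_def)
qed

lemma tf_sff_eq:
  assumes "V 1 = 0"
  shows "tf_sff n g m p V V
    = (\<Sum>i<n. (m p 1 * pd 1 (\<lambda>y. g y i i) p / 2 - mean_curv n g m p * g p i i) * (V i)\<^sup>2)"
  using assms
  by (simp add: tf_sff_def sff_eq gform_diag diag sum_distrib_left sum_subtractf[symmetric]
      algebra_simps power2_eq_square)

end

lemma ss_metric_offdiag: "i \<noteq> j \<Longrightarrow> ss_metric d gtt grr s y i j = 0"
  by (simp add: ss_metric_def)

lemma ss_metric_time: "ss_metric d gtt grr s y 0 0 = gtt (y 1)"
  by (simp add: ss_metric_def)

lemma ss_metric_angular_pos:
  assumes "0 < y 1" "s (y 2) \<noteq> 0" "\<forall>k. 3 \<le> k \<and> k < d \<longrightarrow> sin (y k) \<noteq> 0" "2 \<le> i" "i \<le> d"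
  shows "0 < ss_metric d gtt grr s y i i"
proof -
  have "0 < (\<Prod>k\<in>{3..<i}. (sin (y k))\<^sup>2)"
    using assms by (intro prod_pos) auto
  then show ?thesis using assms by (simp add: ss_metric_def)
qed

lemma pd_radial_ss_metric_time:
  assumes "gtt differentiable (at (p 1))"
  shows "pd 1 (\<lambda>y. ss_metric d gtt grr s y 0 0) p = deriv gtt (p 1)"
proof -
  have "DERIV gtt (0 + p 1) :> deriv gtt (p 1)"
    using assms by (simp add: DERIV_deriv_iff_real_differentiable)
  then have "DERIV (\<lambda>h. gtt (h + p 1)) 0 :> deriv gtt (p 1)"
    by (simp only: DERIV_shift)
  then show ?thesis
    unfolding pd_def ss_metric_time by (simp add: DERIV_imp_deriv add.commute)
qed

lemma pd_radial_ss_metric_angular: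
  assumes "2 \<le> i" "i \<le> d"
  shows "p 1 * pd 1 (\<lambda>y. ss_metric d gtt grr s y i i) p = 2 * ss_metric d gtt grr s p i i"
proof -
  define K where "K = (if i = 2 then 1 else (s (p 2))\<^sup>2 * (\<Prod>k\<in>{3..<i}. (sin (p k))\<^sup>2))"
  have radial_line: "ss_metric d gtt grr s (p(1 := p 1 + h)) i i = (p 1 + h)\<^sup>2 * K" for h
  proof -
    have "(\<Prod>k\<in>{3..<i}. (sin ((p(1 := p 1 + h)) k))\<^sup>2) = (\<Prod>k\<in>{3..<i}. (sin (p k))\<^sup>2)"
      by (rule prod.cong) auto
    then show ?thesis using assms by (auto simp: ss_metric_def K_def)
  qed
  have "DERIV (\<lambda>h. (p 1 + h)\<^sup>2 * K) 0 :> 2 * p 1 * K"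
    by (auto intro!: derivative_eq_intros)
  then have "pd 1 (\<lambda>y. ss_metric d gtt grr s y i i) p = 2 * p 1 * K"
    unfolding pd_def radial_line by (rule DERIV_imp_deriv)
  then show ?thesis using radial_line[of 0] by (simp add: power2_eq_square)
qed

lemma continuous_ss_metric_tangential:
  assumes s: "s = sin \<or> s = (\<lambda>\<theta>. \<theta>) \<or> s = sinh" and "i \<noteq> 1"
  shows "continuous (at 0) (\<lambda>h. ss_metric d gtt grr s (p(i := p i + h)) l l)"
proof (cases "d < l \<or> l \<le> 2")
  case True
  then have "(\<lambda>h. ss_metric d gtt grr s (p(i := p i + h)) l l)
      = (\<lambda>h. ss_metric d gtt grr s p l l)"
    using \<open>i \<noteq> 1\<close> by (auto simp: ss_metric_def)
  then show ?thesis by simp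
next
  case False
  have "p(i := p i + h) = (\<lambda>k. p k + h * coord_vec i k)" for h
    by (auto simp: coord_vec_def)
  moreover have "coord_vec i 1 = 0"
    using \<open>i \<noteq> 1\<close> by (simp add: coord_vec_def)
  ultimately have "(\<lambda>h. ss_metric d gtt grr s (p(i := p i + h)) l l)
      = (\<lambda>h. (p 1)\<^sup>2 * (s (p 2 + h * coord_vec i 2))\<^sup>2
          * (\<Prod>k\<in>{3..<l}. (sin (p k + h * coord_vec i k))\<^sup>2))"
    using False by (simp add: ss_metric_def)
  then show ?thesis
    using s by (elim disjE) (simp_all add: continuous_intros)
qed

lemma tangent_idx_Suc: "tangent_idx (Suc d) = insert 0 {2..d}"
  by (auto simp: tangent_idx_def)

locale ss_level_set =
  fixes d :: nat and gtt grr s :: "real \<Rightarrow> real"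
    and m :: "(nat \<Rightarrow> real) \<Rightarrow> nat \<Rightarrow> real" and p :: "nat \<Rightarrow> real"
  assumes dim: "2 \<le> d"
    and radius_pos: "0 < p 1"
    and gtt_neg: "gtt (p 1) < 0"
    and gtt_differentiable: "gtt differentiable (at (p 1))"
    and s: "s = sin \<or> s = (\<lambda>\<theta>. \<theta>) \<or> s = sinh"
    and chart: "s (p 2) \<noteq> 0" "\<forall>k. 3 \<le> k \<and> k < d \<longrightarrow> sin (p k) \<noteq> 0"
    and normal: "\<And>y a. y 1 = p 1 \<Longrightarrow> a \<in> tangent_idx (Suc d) \<Longrightarrow>
      gform (Suc d) (ss_metric d gtt grr s y) (m y) (coord_vec a) = 0"
begin

abbreviation g where "g \<equiv> ss_metric d gtt grr s"

lemma metric_angular_pos: "2 \<le> i \<Longrightarrow> i \<le> d \<Longrightarrow> 0 < g p i i"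
  using radius_pos chart by (rule ss_metric_angular_pos)

lemma metric_tangential_nonzero:
  assumes "a \<in> tangent_idx (Suc d)"
  shows "g p a a \<noteq> 0"
proof -
  consider "a = 0" | "2 \<le> a" "a \<le> d"
    using assms by (auto simp: tangent_idx_Suc)
  then show ?thesis
    by cases (use gtt_neg metric_angular_pos[of a] in \<open>auto simp: ss_metric_time\<close>)
qed

sublocale diagonal_level_set "Suc d" g m p
proof
  show "1 < Suc d" using dim by simp
  show "\<And>y i j. i \<noteq> j \<Longrightarrow> g y i j = 0" by (rule ss_metric_offdiag)
  show "m p a = 0" if "a \<in> tangent_idx (Suc d)" for a
  proof (rule orthogonal_coord_vec_imp_component_eq_0)
    show "\<And>i j. i \<noteq> j \<Longrightarrow> g p i j = 0" by (rule ss_metric_offdiag)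
    show "a < Suc d" using that by (simp add: tangent_idx_def)
    show "g p a a \<noteq> 0" using that by (rule metric_tangential_nonzero)
    show "gform (Suc d) (g p) (m p) (coord_vec a) = 0" using that by (rule normal[of p, OF refl])
  qed
  show "pd i (\<lambda>y. m y l) p = 0" if "i \<in> tangent_idx (Suc d)" "l \<in> tangent_idx (Suc d)" for i l
  proof (rule pd_normal_component_eq_0)
    show "\<And>y i j. i \<noteq> j \<Longrightarrow> g y i j = 0" by (rule ss_metric_offdiag)
    show "gform (Suc d) (g y) (m y) (coord_vec l) = 0" if "y 1 = p 1" for y
      using that \<open>l \<in> tangent_idx (Suc d)\<close> by (rule normal)
    show "l < Suc d" "i \<noteq> 1" using that by (simp_all add: tangent_idx_def)
    show "continuous (at 0) (\<lambda>h. g (p(i := p i + h)) l l)"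
      using s \<open>i \<noteq> 1\<close> by (rule continuous_ss_metric_tangential)
    show "g p l l \<noteq> 0" using \<open>l \<in> tangent_idx (Suc d)\<close> by (rule metric_tangential_nonzero)
  qed
qed

lemma radial_log_deriv_angular:
  assumes "2 \<le> i" "i \<le> d"
  shows "pd 1 (\<lambda>y. g y i i) p / (2 * g p i i) = 1 / p 1"
  using pd_radial_ss_metric_angular[OF assms, of p] metric_angular_pos[OF assms] radius_pos
  by (simp add: field_simps)

lemma radial_log_deriv_time:
  "pd 1 (\<lambda>y. g y 0 0) p / (2 * g p 0 0) = deriv gtt (p 1) / (2 * gtt (p 1))"
  using pd_radial_ss_metric_time[of gtt p d grr s] gtt_differentiable by (simp only: ss_metric_time)

lemma mean_curv_ss_metric:
  "mean_curv (Suc d) g m p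
    = m p 1 * (deriv gtt (p 1) / (2 * gtt (p 1)) + (real d - 1) / p 1) / real d"
proof -
  have "mean_curv (Suc d) g m p
      = (\<Sum>a\<in>insert 0 {2..d}. m p 1 * pd 1 (\<lambda>y. g y a a) p / (2 * g p a a))
        / real (Suc d - 1)"
    unfolding tangent_idx_Suc[symmetric] by (intro mean_curv_eq metric_tangential_nonzero)
  also have "(\<Sum>a\<in>insert 0 {2..d}. m p 1 * pd 1 (\<lambda>y. g y a a) p / (2 * g p a a))
      = m p 1 * (deriv gtt (p 1) / (2 * gtt (p 1))) + (\<Sum>a=2..d. m p 1 * (1 / p 1))"
  proof -
    have "(\<Sum>a=2..d. m p 1 * (pd 1 (\<lambda>y. g y a a) p / (2 * g p a a)))
        = (\<Sum>a=2..d. m p 1 * (1 / p 1))"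
      by (rule sum.cong[OF refl], subst radial_log_deriv_angular) auto
    then show ?thesis
      unfolding times_divide_eq_right[symmetric] radial_log_deriv_time[symmetric] by simp
  qed
  finally show ?thesis
    using dim by (simp add: of_nat_diff field_simps)
qed

lemma tf_sff_ss_metric:
  assumes "V 1 = 0"
  shows "tf_sff (Suc d) g m p V V
    = m p 1 / real d * (1 / p 1 - deriv gtt (p 1) / (2 * gtt (p 1)))
      * ((1 - real d) * gtt (p 1) * (V 0)\<^sup>2 + (\<Sum>i=2..d. g p i i * (V i)\<^sup>2))"
proof -
  have "0 < d" using dim by simp
  define C where "C = m p 1 / real d * (1 / p 1 - deriv gtt (p 1) / (2 * gtt (p 1)))"
  define w where
    "w i = m p 1 * pd 1 (\<lambda>y. g y i i) p / 2 - mean_curv (Suc d) g m p * g p i i" for i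
  have "tf_sff (Suc d) g m p V V = (\<Sum>i<Suc d. w i * (V i)\<^sup>2)"
    unfolding w_def using assms by (rule tf_sff_eq)
  also have "\<dots> = w 0 * (V 0)\<^sup>2 + (\<Sum>i=2..d. w i * (V i)\<^sup>2)"
  proof -
    have "{..<Suc d} = insert 0 (insert 1 {2..d})" using \<open>0 < d\<close> by auto
    then show ?thesis using assms by simp
  qed
  also have "w 0 = (1 - real d) * gtt (p 1) * C"
    using radial_log_deriv_time gtt_neg radius_pos \<open>0 < d\<close>
    by (simp add: w_def C_def mean_curv_ss_metric ss_metric_time field_simps)
  also have "(\<Sum>i=2..d. w i * (V i)\<^sup>2) = (\<Sum>i=2..d. C * (g p i i * (V i)\<^sup>2))"
  proof (rule sum.cong[OF refl])
    fix i assume "i \<in> {2..d}"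
    then show "w i * (V i)\<^sup>2 = C * (g p i i * (V i)\<^sup>2)"
      using radial_log_deriv_angular[of i] metric_angular_pos[of i] radius_pos dim
      by (simp add: w_def C_def mean_curv_ss_metric field_simps)
  qed
  finally show ?thesis
    unfolding C_def[symmetric] by (simp add: sum_distrib_left algebra_simps)
qed

lemma tangential_quadratic_pos:
  assumes "V 1 = 0" "\<forall>k>d. V k = 0" "V \<noteq> (\<lambda>_. 0)"
  shows "0 < (1 - real d) * gtt (p 1) * (V 0)\<^sup>2 + (\<Sum>i=2..d. g p i i * (V i)\<^sup>2)"
proof -
  have time_coeff: "0 < (1 - real d) * gtt (p 1)"
    using dim gtt_neg by (simp add: mult_neg_neg)
  have angular_nonneg: "0 \<le> g p i i * (V i)\<^sup>2" if "i \<in> {2..d}" for i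
    using that metric_angular_pos[of i] by simp
  obtain j where j: "V j \<noteq> 0" using assms(3) by auto
  then have "j \<noteq> 1" "j \<le> d" using assms(1,2) not_le by auto
  then consider "j = 0" | "j \<in> {2..d}" by force
  then show ?thesis
  proof cases
    case 1
    then have "0 < (1 - real d) * gtt (p 1) * (V 0)\<^sup>2" using j time_coeff by simp
    moreover have "0 \<le> (\<Sum>i=2..d. g p i i * (V i)\<^sup>2)" using angular_nonneg by (rule sum_nonneg)
    ultimately show ?thesis by linarith
  next
    case 2
    then have "0 < (\<Sum>i=2..d. g p i i * (V i)\<^sup>2)"
      using j metric_angular_pos[of j] angular_nonneg by (intro sum_pos2[of _ j]) auto
    moreover have "0 \<le> (1 - real d) * gtt (p 1) * (V 0)\<^sup>2" using time_coeff by simp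
    ultimately show ?thesis by linarith
  qed
qed

end

lemma mult_pos_same_sign:
  fixes c a b :: real
  assumes "0 < a" "0 < b"
  shows "(c * a = 0 \<longleftrightarrow> c * b = 0) \<and> (c * a > 0 \<longleftrightarrow> c * b > 0) \<and> (c * a < 0 \<longleftrightarrow> c * b < 0)"
  using assms by (simp add: zero_less_mult_iff mult_less_0_iff)

theorem lemma1:
  fixes d :: nat and gtt grr s :: "real \<Rightarrow> real" and R :: "real set" and rp :: real
    and p :: "nat \<Rightarrow> real" and m :: "(nat \<Rightarrow> real) \<Rightarrow> nat \<Rightarrow> real"
    and X Y :: "nat \<Rightarrow> real"
  assumes d: "2 \<le> d"
    and R: "open R" "R \<subseteq> {0<..}" "rp \<in> R"
    and sign: "\<forall>r\<in>R. gtt r < 0 \<and> grr r > 0"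
    and smooth: "\<forall>k. \<forall>r\<in>R. ((deriv ^^ k) gtt) differentiable (at r)
                          \<and> ((deriv ^^ k) grr) differentiable (at r)"
    and s: "s = sin \<or> s = (\<lambda>\<theta>. \<theta>) \<or> s = sinh"
    and p_S: "p 1 = rp"
    and p_chart: "s (p 2) \<noteq> 0" "\<forall>k. 3 \<le> k \<and> k < d \<longrightarrow> sin (p k) \<noteq> 0"
    and m_normal: "\<forall>y. y 1 = rp \<longrightarrow>
              (\<forall>k>d. m y k = 0)
            \<and> gform (Suc d) (ss_metric d gtt grr s y) (m y) (m y) = 1
            \<and> (\<forall>a\<in>tangent_idx (Suc d).
                  gform (Suc d) (ss_metric d gtt grr s y) (m y) (coord_vec a) = 0)"
    and m_orient: "(\<forall>y. y 1 = rp \<longrightarrow> m y 1 > 0) \<or> (\<forall>y. y 1 = rp \<longrightarrow> m y 1 < 0)"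
    and X: "X 1 = 0" "\<forall>k>d. X k = 0" "X \<noteq> (\<lambda>_. 0)"
    and Y: "Y 1 = 0" "\<forall>k>d. Y k = 0" "Y \<noteq> (\<lambda>_. 0)"
  shows "(tf_sff (Suc d) (ss_metric d gtt grr s) m p X X = 0
            \<longleftrightarrow> tf_sff (Suc d) (ss_metric d gtt grr s) m p Y Y = 0)
       \<and> (tf_sff (Suc d) (ss_metric d gtt grr s) m p X X > 0
            \<longleftrightarrow> tf_sff (Suc d) (ss_metric d gtt grr s) m p Y Y > 0)
       \<and> (tf_sff (Suc d) (ss_metric d gtt grr s) m p X X < 0
            \<longleftrightarrow> tf_sff (Suc d) (ss_metric d gtt grr s) m p Y Y < 0)"
proof -
  interpret ss_level_set d gtt grr s m p
  proof
    show "0 < p 1" "gtt (p 1) < 0" using R sign p_S by auto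
    show "gtt differentiable (at (p 1))" using smooth R(3) p_S by (metis funpow_0)
    show "gform (Suc d) (ss_metric d gtt grr s y) (m y) (coord_vec a) = 0"
      if "y 1 = p 1" "a \<in> tangent_idx (Suc d)" for y a
      using m_normal that p_S by blast
  qed (fact d s p_chart)+
  show ?thesis
    unfolding tf_sff_ss_metric[of X, OF X(1)] tf_sff_ss_metric[of Y, OF Y(1)]
    using tangential_quadratic_pos[OF X] tangential_quadratic_pos[OF Y] by (rule mult_pos_same_sign)
qed

end
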